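(* Let $(r_n)$ be an increasing sequence of integers such that there is a continuous (non-atomic) finite positive Borel measure $\sigma$ on $\mathbb{T}=\mathbb{R}/\mathbb{Z}$ for which the sequence $(\hat\sigma(n))$, $\hat\sigma(n)=\int_{\mathbb{T}}e^{2\pi int}\,d\sigma(t)$, is not null along $(r_n)$. Then there exists a linear correlation, i.e. a sequence $a(n)=\int_Xf_0(T^{c_0n}x)\cdots f_k(T^{c_kn}x)\,d\mu(x)$ for some invertible measure preserving system $(X,\mu,T)$, $f_j\in L^\infty(\mu)$ and $c_j\in\mathbb{Z}$, whose null component is not null along $(r_n)$.
   Context: A bounded sequence $b$ is null along $(r_n)$ if $\frac1N\sum_{n=1}^N|b(r_n)|\to0$, and null if this holds for $r_n=n$. Nilsequences are uniform limits of sequences $n\mapsto f(\tau^nx)$ with $X=G/\Gamma$ a nilmanifold ($G$ nilpotent Lie group, $\Gamma$ discrete cocompact), $\tau\in G$, $x\in X$, $f\in C(X)$. Every linear correlation admits a unique decomposition as a nilsequence plus a null sequence; the null summand is its null component. *)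

theory Defs
  imports "HOL-Probability.Probability" "HOL-Algebra.Generated_Groups"
begin

fun lower_central :: "('g, 'b) monoid_scheme \<Rightarrow> nat \<Rightarrow> 'g set" where
  "lower_central G 0 = carrier G"
| "lower_central G (Suc i) =
     generate G {x \<otimes>\<^bsub>G\<^esub> y \<otimes>\<^bsub>G\<^esub> inv\<^bsub>G\<^esub> x \<otimes>\<^bsub>G\<^esub> inv\<^bsub>G\<^esub> y
                 | x y. x \<in> carrier G \<and> y \<in> lower_central G i}"

definition nilpotent_group :: "('g, 'b) monoid_scheme \<Rightarrow> bool" where
  "nilpotent_group G \<longleftrightarrow> group G \<and> (\<exists>s. lower_central G s = {\<one>\<^bsub>G\<^esub>})"

definition topological_group :: "('g, 'b) monoid_scheme \<Rightarrow> 'g topology \<Rightarrow> bool" where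
  "topological_group G TG \<longleftrightarrow> group G \<and> topspace TG = carrier G \<and>
     continuous_map (prod_topology TG TG) TG (\<lambda>(x, y). x \<otimes>\<^bsub>G\<^esub> y) \<and>
     continuous_map TG TG (\<lambda>x. inv\<^bsub>G\<^esub> x)"

definition topological_manifold :: "'g topology \<Rightarrow> nat \<Rightarrow> bool" where
  "topological_manifold TG d \<longleftrightarrow> Hausdorff_space TG \<and> second_countable TG \<and>
     (\<forall>g\<in>topspace TG. \<exists>U V. openin TG U \<and> g \<in> U \<and> openin (Euclidean_space d) V \<and>
        (subtopology TG U) homeomorphic_space (subtopology (Euclidean_space d) V))"

text \<open>Lie group: a topological group that is a topological manifold (by the solution of
  Hilbert's fifth problem such a group carries a unique compatible real-analytic structure).\<close>
definition lie_group :: "('g, 'b) monoid_scheme \<Rightarrow> 'g topology \<Rightarrow> bool" where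
  "lie_group G TG \<longleftrightarrow> topological_group G TG \<and> (\<exists>d. topological_manifold TG d)"

text \<open>Nilmanifold data: G nilpotent Lie group, \<Gamma> discrete cocompact subgroup.
  Cocompact: G = K \<Gamma> for a compact K (equivalently G/\<Gamma> compact).\<close>
definition nilmanifold_data :: "('g, 'b) monoid_scheme \<Rightarrow> 'g topology \<Rightarrow> 'g set \<Rightarrow> bool" where
  "nilmanifold_data G TG \<Gamma> \<longleftrightarrow> lie_group G TG \<and> nilpotent_group G \<and> subgroup \<Gamma> G \<and>
     subtopology TG \<Gamma> = discrete_topology \<Gamma> \<and>
     (\<exists>K. compactin TG K \<and> carrier G = (\<Union>k\<in>K. \<Union>\<gamma>\<in>\<Gamma>. {k \<otimes>\<^bsub>G\<^esub> \<gamma>}))"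

text \<open>A continuous
  function on G/\<Gamma> is represented by a continuous function F on G which is right
  \<Gamma>-invariant (the quotient topology on G/\<Gamma> written out), and \<tau> acts by left translation.
  The group is represented on a carrier inside the fixed type real (every second
  countable manifold has cardinality at most the continuum).\<close>
definition basic_nilsequence :: "(int \<Rightarrow> complex) \<Rightarrow> bool" where
  "basic_nilsequence u \<longleftrightarrow>
     (\<exists>(G :: real monoid) TG \<Gamma> F \<tau> g. nilmanifold_data G TG \<Gamma> \<and>
        continuous_map TG euclidean F \<and>
        (\<forall>h\<in>carrier G. \<forall>\<gamma>\<in>\<Gamma>. F (h \<otimes>\<^bsub>G\<^esub> \<gamma>) = F h) \<and>
        \<tau> \<in> carrier G \<and> g \<in> carrier G \<and>
        (\<forall>n::int. u n = F ((\<tau> [^]\<^bsub>G\<^esub> n) \<otimes>\<^bsub>G\<^esub> g)))"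

definition nilsequence :: "(int \<Rightarrow> complex) \<Rightarrow> bool" where
  "nilsequence b \<longleftrightarrow> (\<forall>\<epsilon>>0. \<exists>u. basic_nilsequence u \<and> (\<forall>n. norm (b n - u n) \<le> \<epsilon>))"

definition null_along :: "(nat \<Rightarrow> int) \<Rightarrow> (int \<Rightarrow> complex) \<Rightarrow> bool" where
  "null_along r b \<longleftrightarrow> (\<lambda>N. (\<Sum>n=1..N. norm (b (r n))) / real N) \<longlonglongrightarrow> 0"

definition null_seq :: "(int \<Rightarrow> complex) \<Rightarrow> bool" where
  "null_seq b \<longleftrightarrow> null_along int b"

definition null_component :: "(int \<Rightarrow> complex) \<Rightarrow> (int \<Rightarrow> complex) \<Rightarrow> bool" where
  "null_component a b \<longleftrightarrow> bounded (range b) \<and> null_seq b \<and> nilsequence (\<lambda>n. a n - b n)"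

definition invertible_mps :: "'x measure \<Rightarrow> ('x \<Rightarrow> 'x) \<Rightarrow> bool" where
  "invertible_mps \<mu> T \<longleftrightarrow> prob_space \<mu> \<and> bij_betw T (space \<mu>) (space \<mu>) \<and>
     T \<in> measurable \<mu> \<mu> \<and> inv_into (space \<mu>) T \<in> measurable \<mu> \<mu> \<and>
     (\<forall>A\<in>sets \<mu>. emeasure \<mu> (T -` A \<inter> space \<mu>) = emeasure \<mu> A)"

definition iterZ :: "'x measure \<Rightarrow> ('x \<Rightarrow> 'x) \<Rightarrow> int \<Rightarrow> 'x \<Rightarrow> 'x" where
  "iterZ \<mu> T k = (if k \<ge> 0 then T ^^ nat k else (inv_into (space \<mu>) T) ^^ nat (- k))"

definition Linfty :: "'x measure \<Rightarrow> ('x \<Rightarrow> complex) \<Rightarrow> bool" where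
  "Linfty \<mu> f \<longleftrightarrow> f \<in> borel_measurable \<mu> \<and> (\<exists>C. AE x in \<mu>. norm (f x) \<le> C)"

definition linear_correlation_of ::
  "'x measure \<Rightarrow> ('x \<Rightarrow> 'x) \<Rightarrow> nat \<Rightarrow> (nat \<Rightarrow> 'x \<Rightarrow> complex) \<Rightarrow> (nat \<Rightarrow> int) \<Rightarrow> int \<Rightarrow> complex" where
  "linear_correlation_of \<mu> T k f c n =
     integral\<^sup>L \<mu> (\<lambda>x. \<Prod>j\<le>k. f j (iterZ \<mu> T (c j * n) x))"

definition is_linear_correlation :: "'x itself \<Rightarrow> (int \<Rightarrow> complex) \<Rightarrow> bool" where
  "is_linear_correlation _ a \<longleftrightarrow>
     (\<exists>(\<mu> :: 'x measure) T k f c. invertible_mps \<mu> T \<and> (\<forall>j\<le>k. Linfty \<mu> (f j)) \<and>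
        a = linear_correlation_of \<mu> T k f c)"

text \<open>Finite positive Borel measures on T = R/Z, represented on [0,1).\<close>
definition circle_measure :: "real measure \<Rightarrow> bool" where
  "circle_measure \<sigma> \<longleftrightarrow> finite_measure \<sigma> \<and> sets \<sigma> = sets (restrict_space borel {0..<1})"

definition fourier_coeff :: "real measure \<Rightarrow> int \<Rightarrow> complex" where
  "fourier_coeff \<sigma> n = integral\<^sup>L \<sigma> (\<lambda>t. cis (2 * pi * of_int n * t))"

end

theory Submission
  imports Defs
begin

(* Wiener's lemma makes the Fourier coefficients of a continuous measure null: the Cesaro mean of
   |sigma^(n)|^2 is the sigma x sigma integral of the Cesaro mean of exp(2 pi i n (x - y)), which
   tends to 0 off the diagonal, and the diagonal is a null set.  On the other hand sigma^/|sigma| is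
   a linear correlation: on the skew product (x, y) |-> (x, y + x) of the torus with the measure
   (sigma/|sigma|) x Lebesgue, the functions exp(-2 pi i y) and exp(2 pi i y) correlate along the
   exponents 0 and n to int exp(2 pi i n x) dsigma/|sigma|.  Being null, this correlation is its own
   null component (its nilsequence part is 0), and it is not null along r by hypothesis. *)

definition trivial_group :: "real monoid" where
  "trivial_group = \<lparr>carrier = {0}, mult = (\<lambda>_ _. 0), one = 0\<rparr>"

lemma trivial_group_simps [simp]:
  "carrier trivial_group = {0}" "\<one>\<^bsub>trivial_group\<^esub> = 0" "x \<otimes>\<^bsub>trivial_group\<^esub> y = 0"
  by (simp_all add: trivial_group_def)

lemma group_trivial_group: "group trivial_group"
  by (rule groupI) auto

lemma topological_group_trivial_group: "topological_group trivial_group (discrete_topology {0})"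
proof -
  have inv: "inv\<^bsub>trivial_group\<^esub> x = 0" if "x \<in> carrier trivial_group" for x
    using group.inv_closed[OF group_trivial_group that] by simp
  have "continuous_map (discrete_topology {0}) (discrete_topology {0}) (\<lambda>x. inv\<^bsub>trivial_group\<^esub> x)"
    by (rule continuous_map_eq[of _ _ "\<lambda>_. 0"]) (auto simp: inv)
  then show ?thesis
    unfolding topological_group_def using group_trivial_group
    by (simp add: case_prod_unfold)
qed

lemma topological_manifold_discrete_singleton: "topological_manifold (discrete_topology {a}) 0"
  unfolding topological_manifold_def
proof (intro conjI ballI exI)
  have "discrete_topology {a} homeomorphic_space Euclidean_space 0"
    unfolding homeomorphic_space_def homeomorphic_maps_def
    by (rule exI[of _ "\<lambda>_ _. 0"], rule exI[of _ "\<lambda>_. a"])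
       (auto simp: topspace_Euclidean_space)
  then show "subtopology (discrete_topology {a}) {a} homeomorphic_space
      subtopology (Euclidean_space 0) (topspace (Euclidean_space 0))"
    by simp
qed (auto simp: second_countable_discrete_topology)

lemma nilmanifold_data_trivial_group:
  "nilmanifold_data trivial_group (discrete_topology {0}) {0}"
  unfolding nilmanifold_data_def lie_group_def nilpotent_group_def
proof (intro conjI exI)
  show "subgroup {0} trivial_group"
    using group.subgroup_self[OF group_trivial_group] by simp
  show "lower_central trivial_group 0 = {\<one>\<^bsub>trivial_group\<^esub>}"
    by simp
  show "carrier trivial_group = (\<Union>k\<in>{0}. \<Union>\<gamma>\<in>{0}. {k \<otimes>\<^bsub>trivial_group\<^esub> \<gamma>})"
    by simp
qed (use topological_group_trivial_group topological_manifold_discrete_singleton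
         group_trivial_group in auto)

lemma basic_nilsequence_const: "basic_nilsequence (\<lambda>n. c)"
  unfolding basic_nilsequence_def
  by (rule exI[of _ trivial_group], rule exI[of _ "discrete_topology {0}"], rule exI[of _ "{0}"],
      rule exI[of _ "\<lambda>_. c"], rule exI[of _ 0], rule exI[of _ 0])
     (simp add: nilmanifold_data_trivial_group)

lemma nilsequence_const: "nilsequence (\<lambda>n. c)"
  unfolding nilsequence_def using basic_nilsequence_const[of c] by auto

lemma null_along_mult_const:
  assumes "null_along r b"
  shows "null_along r (\<lambda>n. b n * c)"
proof -
  have "(\<lambda>N. norm c * ((\<Sum>n=1..N. norm (b (r n))) / real N)) \<longlonglongrightarrow> norm c * 0"
    using assms unfolding null_along_def by (intro tendsto_mult tendsto_const)
  then show ?thesis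
    unfolding null_along_def by (simp add: norm_mult sum_distrib_left mult.commute)
qed

lemma null_along_mult_const_iff:
  assumes "c \<noteq> 0"
  shows "null_along r (\<lambda>n. b n * c) \<longleftrightarrow> null_along r b"
proof
  assume "null_along r (\<lambda>n. b n * c)"
  then have "null_along r (\<lambda>n. b n * c * inverse c)" by (rule null_along_mult_const)
  then show "null_along r b" using assms by (simp add: mult.assoc)
qed (rule null_along_mult_const)

lemma null_component_self:
  assumes "bounded (range a)" and "null_seq a"
  shows "null_component a a"
  unfolding null_component_def using assms nilsequence_const[of 0] by simp

lemma cesaro_mean_tendsto_zero_if_square_mean:
  fixes a :: "nat \<Rightarrow> real"
  assumes nonneg: "\<And>n. 0 \<le> a n"
    and square_mean: "(\<lambda>N. (\<Sum>n=1..N. (a n)\<^sup>2) / real N) \<longlonglongrightarrow> 0"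
  shows "(\<lambda>N. (\<Sum>n=1..N. a n) / real N) \<longlonglongrightarrow> 0"
proof (rule Lim_null_comparison[OF always_eventually[OF allI]])
  fix N
  have "((\<Sum>n=1..N. a n) / real N)\<^sup>2 \<le> (\<Sum>n=1..N. (a n)\<^sup>2) / real N"
  proof (cases "N = 0")
    case False
    have "((\<Sum>n=1..N. a n) / real N)\<^sup>2 = (\<Sum>n=1..N. a n)\<^sup>2 / (real N * real N)"
      by (simp add: power_divide power2_eq_square)
    also have "\<dots> \<le> ((\<Sum>n=1..N. (a n)\<^sup>2) * real N) / (real N * real N)"
      using sum_squared_le_sum_of_squares[of a "{1..N}"] by (intro divide_right_mono) simp_all
    also have "\<dots> = (\<Sum>n=1..N. (a n)\<^sup>2) / real N" using False by simp
    finally show ?thesis .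
  qed simp
  then show "norm ((\<Sum>n=1..N. a n) / real N) \<le> sqrt ((\<Sum>n=1..N. (a n)\<^sup>2) / real N)"
    using nonneg by (simp add: real_le_rsqrt sum_nonneg)
next
  show "(\<lambda>N. sqrt ((\<Sum>n=1..N. (a n)\<^sup>2) / real N)) \<longlonglongrightarrow> 0"
    using tendsto_real_sqrt[OF square_mean] by simp
qed

lemma cesaro_mean_cis_tendsto_zero:
  fixes x :: real
  assumes "x \<notin> \<int>"
  shows "(\<lambda>N. (\<Sum>n=1..N. cis (2 * pi * (real n * x))) / of_nat N) \<longlonglongrightarrow> 0"
proof -
  define z where "z = cis (2 * pi * x)"
  have "z \<noteq> 1"
  proof
    assume "z = 1"
    then have "cos (2 * pi * x) = 1"
      unfolding z_def by (metis cis.sel(1) one_complex.sel(1))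
    then obtain k :: int where "2 * pi * x = of_int k * 2 * pi"
      unfolding cos_one_2pi_int by blast
    then have "x = of_int k" by simp
    then show False using assms by simp
  qed
  have power: "cis (2 * pi * (real n * x)) = z ^ n" for n
    unfolding z_def Complex.DeMoivre by (simp add: algebra_simps)
  have geometric: "(\<Sum>n=1..N. cis (2 * pi * (real n * x))) = z * ((z ^ N - 1) / (z - 1))" for N
  proof -
    have "(\<Sum>n=1..N. cis (2 * pi * (real n * x))) = (\<Sum>i<N. z ^ Suc i)"
      unfolding power by (rule sum.reindex_bij_witness[of _ Suc "\<lambda>n. n - 1"]) auto
    also have "\<dots> = z * ((z ^ N - 1) / (z - 1))"
      using geometric_sum[OF \<open>z \<noteq> 1\<close>] by (simp flip: sum_distrib_left)
    finally show ?thesis .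
  qed
  have "norm ((\<Sum>n=1..N. cis (2 * pi * (real n * x))) / of_nat N) \<le> (2 / norm (z - 1)) / real N"
    for N
  proof -
    have "norm (z ^ N - 1) \<le> 2"
      using norm_triangle_ineq4[of "z ^ N" 1] by (simp add: z_def norm_power)
    then have "norm (\<Sum>n=1..N. cis (2 * pi * (real n * x))) \<le> 2 / norm (z - 1)"
      unfolding geometric using \<open>z \<noteq> 1\<close>
      by (simp add: z_def norm_mult norm_divide divide_right_mono)
    then show ?thesis
      unfolding norm_divide norm_of_nat by (rule divide_right_mono) simp
  qed
  then show ?thesis
    by (rule Lim_null_comparison[OF always_eventually[OF allI]]) (rule lim_const_over_n)
qed

section \<open>Wiener's lemma\<close>

lemma circle_measure_space:
  assumes "circle_measure \<sigma>"
  shows "space \<sigma> = {0..<1}"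
proof -
  have "space \<sigma> = space (restrict_space borel {0..<1::real})"
    using assms unfolding circle_measure_def by (intro sets_eq_imp_space_eq) simp
  then show ?thesis by (simp add: space_restrict_space)
qed

lemma circle_measure_measurable_id:
  assumes "circle_measure \<sigma>"
  shows "(\<lambda>x. x) \<in> borel_measurable \<sigma>"
proof -
  have sets: "sets \<sigma> = sets (restrict_space borel {0..<1::real})"
    using assms by (simp add: circle_measure_def)
  have "(\<lambda>x::real. x) \<in> borel_measurable (restrict_space borel {0..<1})"
    by (rule measurable_restrict_space1) simp
  then show ?thesis
    by (simp only: measurable_cong_sets[OF sets refl])
qed

lemma cis_measurable [measurable]: "cis \<in> borel_measurable borel"
  by (intro borel_measurable_continuous_onI continuous_intros)

lemma norm_fourier_coeff_le: "norm (fourier_coeff \<sigma> n) \<le> measure \<sigma> (space \<sigma>)"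
  using integral_norm_bound[of \<sigma> "\<lambda>t. cis (2 * pi * of_int n * t)"] by (simp add: fourier_coeff_def)

lemma measure_space_pos_if_not_null_along:
  assumes "\<not> null_along r (fourier_coeff \<sigma>)"
  shows "0 < measure \<sigma> (space \<sigma>)"
proof (rule ccontr)
  assume "\<not> 0 < measure \<sigma> (space \<sigma>)"
  then have "fourier_coeff \<sigma> = (\<lambda>n. 0)"
    using norm_fourier_coeff_le[of \<sigma>] measure_nonneg[of \<sigma> "space \<sigma>"] by (auto simp: fun_eq_iff)
  with assms show False by (simp add: null_along_def)
qed

lemma fourier_coeff_norm_square:
  fixes \<sigma> :: "real measure"
  assumes "finite_measure \<sigma>" and [measurable]: "(\<lambda>x. x) \<in> borel_measurable \<sigma>"
  shows "complex_of_real ((norm (fourier_coeff \<sigma> n))\<^sup>2)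
    = (\<integral>p. cis (2 * pi * of_int n * (fst p - snd p)) \<partial>(\<sigma> \<Otimes>\<^sub>M \<sigma>))"
proof -
  interpret pair_sigma_finite \<sigma> \<sigma>
    using assms(1) by (simp add: finite_measure_def pair_sigma_finite_def)
  interpret finite_measure "\<sigma> \<Otimes>\<^sub>M \<sigma>"
    using assms(1) by (rule finite_measure_pair_measure) (rule assms(1))
  have "integrable (\<sigma> \<Otimes>\<^sub>M \<sigma>)
      (\<lambda>p. cis (2 * pi * of_int n * fst p) * cis (- (2 * pi * of_int n * snd p)))"
    by (rule integrable_const_bound[where B=1]) (auto simp: norm_mult)
  note Fubini = integral_fst'[OF this]
  have "complex_of_real ((norm (fourier_coeff \<sigma> n))\<^sup>2) = fourier_coeff \<sigma> n * cnj (fourier_coeff \<sigma> n)"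
    by (rule complex_norm_square)
  also have "\<dots> = (\<integral>s. (\<integral>t. cis (2 * pi * of_int n * s) * cis (- (2 * pi * of_int n * t)) \<partial>\<sigma>) \<partial>\<sigma>)"
    unfolding fourier_coeff_def by (simp flip: cis_cnj)
  also have "\<dots> = (\<integral>p. cis (2 * pi * of_int n * fst p) * cis (- (2 * pi * of_int n * snd p)) \<partial>(\<sigma> \<Otimes>\<^sub>M \<sigma>))"
    using Fubini by simp
  also have "\<dots> = (\<integral>p. cis (2 * pi * of_int n * (fst p - snd p)) \<partial>(\<sigma> \<Otimes>\<^sub>M \<sigma>))"
    by (simp add: cis_mult algebra_simps)
  finally show ?thesis .
qed

lemma AE_pair_measure_neq:
  fixes \<sigma> :: "real measure"
  assumes "sigma_finite_measure \<sigma>" and [measurable]: "(\<lambda>x. x) \<in> borel_measurable \<sigma>"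
    and atomless: "\<forall>t\<in>space \<sigma>. emeasure \<sigma> {t} = 0"
  shows "AE p in \<sigma> \<Otimes>\<^sub>M \<sigma>. fst p \<noteq> snd p"
proof -
  interpret sigma_finite_measure \<sigma> by (rule assms(1))
  define D where "D = {p \<in> space (\<sigma> \<Otimes>\<^sub>M \<sigma>). fst p = snd p}"
  have D: "D \<in> sets (\<sigma> \<Otimes>\<^sub>M \<sigma>)" unfolding D_def by measurable
  have "emeasure (\<sigma> \<Otimes>\<^sub>M \<sigma>) D = (\<integral>\<^sup>+x. emeasure \<sigma> (Pair x -` D) \<partial>\<sigma>)"
    by (rule emeasure_pair_measure_alt[OF D])
  also have "\<dots> = (\<integral>\<^sup>+x. 0 \<partial>\<sigma>)"
  proof (rule nn_integral_cong)
    fix x assume "x \<in> space \<sigma>"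
    moreover from this have "Pair x -` D = {x}" by (auto simp: D_def space_pair_measure)
    ultimately show "emeasure \<sigma> (Pair x -` D) = 0" using atomless by simp
  qed
  finally have "D \<in> null_sets (\<sigma> \<Otimes>\<^sub>M \<sigma>)" using D by (simp add: null_sets_def)
  then show ?thesis by (rule AE_I') (auto simp: D_def)
qed

lemma Ints_diff_unit_interval_imp_eq:
  fixes x y :: real
  assumes "x \<in> {0..<1}" and "y \<in> {0..<1}" and "x - y \<in> \<int>"
  shows "x = y"
proof -
  obtain k :: int where k: "x - y = of_int k"
    using assms(3) by (auto elim!: Ints_cases)
  with assms(1,2) have "-1 < k" "k < 1" by auto
  with k show ?thesis by simp
qed

lemma AE_cesaro_mean_cis_diff_tendsto_zero:
  assumes circle: "circle_measure \<sigma>" and atomless: "\<forall>t\<in>space \<sigma>. emeasure \<sigma> {t} = 0"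
  shows "AE p in \<sigma> \<Otimes>\<^sub>M \<sigma>.
    (\<lambda>N. (\<Sum>n=1..N. cis (2 * pi * (real n * (fst p - snd p)))) / of_nat N) \<longlonglongrightarrow> 0"
proof -
  have "sigma_finite_measure \<sigma>"
    using circle by (simp add: circle_measure_def finite_measure_def)
  from AE_pair_measure_neq[OF this circle_measure_measurable_id[OF circle] atomless]
  show ?thesis
  proof (rule AE_mp[OF _ AE_I2[OF impI]])
    fix p assume "p \<in> space (\<sigma> \<Otimes>\<^sub>M \<sigma>)" and "fst p \<noteq> snd p"
    then have "fst p - snd p \<notin> \<int>"
      using Ints_diff_unit_interval_imp_eq circle_measure_space[OF circle]
      by (auto simp: space_pair_measure)
    then show "(\<lambda>N. (\<Sum>n=1..N. cis (2 * pi * (real n * (fst p - snd p)))) / of_nat N) \<longlonglongrightarrow> 0"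
      by (rule cesaro_mean_cis_tendsto_zero)
  qed
qed

lemma square_mean_fourier_coeff_tendsto_zero:
  assumes circle: "circle_measure \<sigma>" and atomless: "\<forall>t\<in>space \<sigma>. emeasure \<sigma> {t} = 0"
  shows "(\<lambda>N. (\<Sum>n=1..N. (norm (fourier_coeff \<sigma> (int n)))\<^sup>2) / real N) \<longlonglongrightarrow> 0"
proof -
  have finite: "finite_measure \<sigma>" using circle by (simp add: circle_measure_def)
  interpret finite_measure "\<sigma> \<Otimes>\<^sub>M \<sigma>"
    using finite by (rule finite_measure_pair_measure) (rule finite)
  have id_measurable [measurable]: "(\<lambda>x. x) \<in> borel_measurable \<sigma>"
    using circle by (rule circle_measure_measurable_id)
  define K where "K N p = (\<Sum>n=1..N. cis (2 * pi * (real n * (fst p - snd p)))) / of_nat N"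
    for N p
  have [measurable]: "K N \<in> borel_measurable (\<sigma> \<Otimes>\<^sub>M \<sigma>)" for N
    unfolding K_def by measurable
  have "(\<lambda>N. integral\<^sup>L (\<sigma> \<Otimes>\<^sub>M \<sigma>) (K N)) \<longlonglongrightarrow> integral\<^sup>L (\<sigma> \<Otimes>\<^sub>M \<sigma>) (\<lambda>_. 0)"
  proof (rule integral_dominated_convergence[where w="\<lambda>_. 1"])
    show "AE p in \<sigma> \<Otimes>\<^sub>M \<sigma>. (\<lambda>N. K N p) \<longlonglongrightarrow> 0"
      unfolding K_def by (rule AE_cesaro_mean_cis_diff_tendsto_zero[OF circle atomless])
    show "AE p in \<sigma> \<Otimes>\<^sub>M \<sigma>. norm (K N p) \<le> 1" for N
    proof (rule AE_I2)
      fix p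
      have "norm (\<Sum>n=1..N. cis (2 * pi * (real n * (fst p - snd p)))) \<le> real N"
        using norm_sum[of "\<lambda>n. cis (2 * pi * (real n * (fst p - snd p)))" "{1..N}"] by simp
      then show "norm (K N p) \<le> 1"
        unfolding K_def by (cases "N = 0") (auto simp: norm_divide divide_le_eq)
    qed
  qed auto
  moreover have "integral\<^sup>L (\<sigma> \<Otimes>\<^sub>M \<sigma>) (K N)
      = complex_of_real ((\<Sum>n=1..N. (norm (fourier_coeff \<sigma> (int n)))\<^sup>2) / real N)" for N
  proof -
    have "integrable (\<sigma> \<Otimes>\<^sub>M \<sigma>) (\<lambda>p. cis (2 * pi * (real n * (fst p - snd p))))" for n
      by (rule integrable_const_bound[where B=1]) auto
    then have "integral\<^sup>L (\<sigma> \<Otimes>\<^sub>M \<sigma>) (K N)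
        = (\<Sum>n=1..N. \<integral>p. cis (2 * pi * of_int (int n) * (fst p - snd p)) \<partial>(\<sigma> \<Otimes>\<^sub>M \<sigma>)) / of_nat N"
      unfolding K_def by (simp add: integral_sum mult.assoc)
    also have "\<dots> = (\<Sum>n=1..N. complex_of_real ((norm (fourier_coeff \<sigma> (int n)))\<^sup>2)) / of_nat N"
      by (simp only: fourier_coeff_norm_square[OF finite id_measurable])
    finally show ?thesis by simp
  qed
  ultimately have "(\<lambda>N. complex_of_real ((\<Sum>n=1..N. (norm (fourier_coeff \<sigma> (int n)))\<^sup>2) / real N))
      \<longlonglongrightarrow> 0"
    by simp
  from tendsto_Re[OF this] show ?thesis by simp
qed

lemma null_seq_fourier_coeff:
  assumes "circle_measure \<sigma>" and "\<forall>t\<in>space \<sigma>. emeasure \<sigma> {t} = 0"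
  shows "null_seq (fourier_coeff \<sigma>)"
  unfolding null_seq_def null_along_def
  using square_mean_fourier_coeff_tendsto_zero[OF assms]
  by (rule cesaro_mean_tendsto_zero_if_square_mean[rotated]) simp

lemma emeasure_lborel_vimage_translate:
  fixes X :: "real set"
  assumes "X \<in> sets borel"
  shows "emeasure lborel ((\<lambda>y. y + c) -` X) = emeasure lborel X"
proof -
  have "emeasure lborel ((+) c -` X \<inter> space lborel) = emeasure (distr lborel borel ((+) c)) X"
    using assms by (intro emeasure_distr[symmetric]) auto
  moreover have "(+) c -` X = (\<lambda>y. y + c) -` X" by (auto simp: add.commute)
  ultimately show ?thesis by (simp add: lborel_distr_plus)
qed

lemma frac_add_eq_if:
  fixes y s :: real
  assumes "0 \<le> y" "y < 1" "0 \<le> s" "s < 1"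
  shows "frac (y + s) = (if y + s < 1 then y + s else y + s - 1)"
  using assms by (auto simp: frac_unique_iff)

lemma emeasure_lborel_frac_translate:
  fixes B :: "real set"
  assumes B: "B \<in> sets borel" "B \<subseteq> {0..<1}"
  shows "emeasure lborel {y\<in>{0..<1}. frac (y + t) \<in> B} = emeasure lborel B"
proof -
  define s where "s = frac t"
  have s: "0 \<le> s" "s < 1" by (simp_all add: s_def frac_lt_1)
  have "{y\<in>{0..<1}. frac (y + t) \<in> B}
      = (\<lambda>y. y + s) -` (B \<inter> {s..<1}) \<union> (\<lambda>y. y + (s - 1)) -` (B \<inter> {0..<s})"
  proof -
    have "frac (y + t) = frac (y + s)" for y by (simp add: s_def)
    then show ?thesis
      using B(2) s by (auto simp: frac_add_eq_if add_diff_eq split: if_splits)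
  qed
  also have "emeasure lborel \<dots>
      = emeasure lborel ((\<lambda>y. y + s) -` (B \<inter> {s..<1}))
        + emeasure lborel ((\<lambda>y. y + (s - 1)) -` (B \<inter> {0..<s}))"
    using B(1) by (intro plus_emeasure[symmetric]) auto
  also have "\<dots> = emeasure lborel (B \<inter> {s..<1}) + emeasure lborel (B \<inter> {0..<s})"
    using B(1) by (simp add: emeasure_lborel_vimage_translate del: vimage_Int)
  also have "\<dots> = emeasure lborel (B \<inter> {s..<1} \<union> B \<inter> {0..<s})"
    using B(1) by (intro plus_emeasure) auto
  also have "B \<inter> {s..<1} \<union> B \<inter> {0..<s} = B" using B(2) s by auto
  finally show ?thesis .
qed

lemma cis_frac: "cis (2 * pi * frac x) = cis (2 * pi * x)"
proof -
  have "cis (2 * pi * x) = cis (2 * pi * frac x) * cis (2 * pi * of_int \<lfloor>x\<rfloor>)"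
    by (simp add: cis_mult frac_def algebra_simps)
  then show ?thesis by simp
qed

locale measurable_flow =
  fixes \<mu> :: "'a measure" and S :: "int \<Rightarrow> 'a \<Rightarrow> 'a"
  assumes flow_measurable [measurable]: "S n \<in> measurable \<mu> \<mu>"
    and flow_zero: "x \<in> space \<mu> \<Longrightarrow> S 0 x = x"
    and flow_add: "x \<in> space \<mu> \<Longrightarrow> S a (S b x) = S (a + b) x"
begin

lemma flow_in_space: "x \<in> space \<mu> \<Longrightarrow> S n x \<in> space \<mu>"
  using measurable_space[OF flow_measurable] .

lemma flow_inverse: "x \<in> space \<mu> \<Longrightarrow> S (- n) (S n x) = x"
  by (simp add: flow_add flow_zero)

lemma bij_betw_flow: "bij_betw (S 1) (space \<mu>) (space \<mu>)"
  using flow_inverse[of _ 1] flow_inverse[of _ "-1"]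
  by (intro bij_betwI[where g = "S (-1)"]) (auto simp: flow_in_space)

lemma inv_into_flow: "x \<in> space \<mu> \<Longrightarrow> inv_into (space \<mu>) (S 1) x = S (-1) x"
  using flow_inverse[of _ "-1"]
  by (intro inv_into_f_eq bij_betw_imp_inj_on[OF bij_betw_flow]) (auto simp: flow_in_space)

lemma iterZ_flow:
  assumes x: "x \<in> space \<mu>"
  shows "iterZ \<mu> (S 1) n x = S n x"
proof -
  have forward: "(S 1 ^^ k) x = S (int k) x" for k
    by (induction k) (simp_all add: x flow_zero flow_add add.commute)
  have backward: "(inv_into (space \<mu>) (S 1) ^^ k) x = S (- int k) x" for k
    by (induction k) (simp_all add: x flow_zero flow_add flow_in_space inv_into_flow)
  show ?thesis
    by (simp add: iterZ_def forward backward)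
qed

lemma invertible_mps_flow:
  assumes "prob_space \<mu>" and "distr \<mu> \<mu> (S 1) = \<mu>"
  shows "invertible_mps \<mu> (S 1)"
  unfolding invertible_mps_def
proof (intro conjI ballI)
  show "inv_into (space \<mu>) (S 1) \<in> measurable \<mu> \<mu>"
    using flow_measurable[of "-1"] by (rule measurable_cong[THEN iffD1, rotated]) (simp add: inv_into_flow)
  show "emeasure \<mu> (S 1 -` A \<inter> space \<mu>) = emeasure \<mu> A" if "A \<in> sets \<mu>" for A
    using emeasure_distr[OF flow_measurable[of 1] that] assms(2) by simp
qed (use assms(1) bij_betw_flow in auto)

end

section \<open>The skew product over a measure on the circle\<close>

lemma borel_measurable_frac [measurable]: "(frac :: real \<Rightarrow> real) \<in> borel_measurable borel"
proof -
  have "(\<lambda>x::real. x - of_int \<lfloor>x\<rfloor>) \<in> borel_measurable borel" by measurable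
  then show ?thesis by (simp add: frac_def[abs_def])
qed

definition skew :: "int \<Rightarrow> real \<times> real \<Rightarrow> real \<times> real" where
  "skew n p = (fst p, frac (snd p + of_int n * fst p))"

(* Linear correlations are taken over the type int => real: the point (x, y) of the torus is
   stored as the function with value x at 0 and y at 1. *)
definition embed_pair :: "real \<times> real \<Rightarrow> int \<Rightarrow> real" where
  "embed_pair p k = (if k = 0 then fst p else if k = 1 then snd p else 0)"

definition skew_flow :: "int \<Rightarrow> (int \<Rightarrow> real) \<Rightarrow> int \<Rightarrow> real" where
  "skew_flow n z = z(1 := frac (z 1 + of_int n * z 0))"

definition skew_observable :: "nat \<Rightarrow> (int \<Rightarrow> real) \<Rightarrow> complex" where
  "skew_observable j z = cis (2 * pi * (if j = 0 then - z 1 else z 1))"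

lemma inj_embed_pair: "inj embed_pair"
proof (rule injI)
  fix p q assume "embed_pair p = embed_pair q"
  then have "embed_pair p 0 = embed_pair q 0" "embed_pair p 1 = embed_pair q 1" by simp_all
  then show "p = q" by (simp add: embed_pair_def prod_eq_iff)
qed

lemma embed_pair_simps [simp]: "embed_pair p 0 = fst p" "embed_pair p 1 = snd p"
  by (simp_all add: embed_pair_def)

lemma skew_flow_embed_pair: "skew_flow n (embed_pair p) = embed_pair (skew n p)"
  by (auto simp: skew_flow_def embed_pair_def skew_def)

lemma skew_flow_add: "skew_flow a (skew_flow b z) = skew_flow (a + b) z"
  by (simp add: skew_flow_def algebra_simps)

lemma skew_observable_product:
  "(\<Prod>j\<le>1. skew_observable j (skew_flow (int j * n) z)) = cis (2 * pi * of_int n * z 0)"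
proof -
  have "{..1::nat} = {0, 1}" by auto
  then have "(\<Prod>j\<le>1. skew_observable j (skew_flow (int j * n) z))
      = inverse (cis (2 * pi * frac (z 1))) * cis (2 * pi * frac (z 1 + of_int n * z 0))"
    by (simp add: skew_observable_def skew_flow_def cis_inverse)
  also have "\<dots> = inverse (cis (2 * pi * z 1)) * cis (2 * pi * (z 1 + of_int n * z 0))"
    by (simp only: cis_frac)
  also have "\<dots> = cis (2 * pi * of_int n * z 0)"
    by (simp add: cis_inverse cis_mult algebra_simps)
  finally show ?thesis .
qed

locale normalized_skew_product =
  fixes \<sigma> :: "real measure"
  assumes finite_\<sigma>: "finite_measure \<sigma>"
    and measurable_id [measurable]: "(\<lambda>x. x) \<in> borel_measurable \<sigma>"
    and mass_pos: "0 < measure \<sigma> (space \<sigma>)"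
begin

(* The factor 1/sigma(T) makes M a probability space; it reappears in the correlation. *)
definition L :: "real measure" where
  "L = scale_measure (ennreal (1 / measure \<sigma> (space \<sigma>))) (restrict_space lborel {0..<1})"

definition M :: "(real \<times> real) measure" where
  "M = \<sigma> \<Otimes>\<^sub>M L"

definition \<mu> :: "(int \<Rightarrow> real) measure" where
  "\<mu> = embed_measure M embed_pair"

lemma space_L: "space L = {0..<1}"
  by (simp add: L_def space_scale_measure)

lemma sets_L [measurable_cong]: "sets L = sets (restrict_space lborel {0..<1})"
  by (simp add: L_def)

lemma measurable_id_L [measurable]: "(\<lambda>x. x) \<in> borel_measurable L"
  using measurable_restrict_space1[OF measurable_ident_sets[OF sets_lborel], of "{0..<1::real}"]
  by (simp add: measurable_cong_sets[OF sets_L refl])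

lemma sets_L_iff: "X \<in> sets L \<longleftrightarrow> X \<in> sets borel \<and> X \<subseteq> {0..<1}"
  by (auto simp: sets_L sets_restrict_space_iff)

lemma emeasure_L:
  assumes "X \<in> sets L"
  shows "emeasure L X = ennreal (1 / measure \<sigma> (space \<sigma>)) * emeasure lborel X"
proof -
  have "X \<subseteq> {0..<1}" using assms by (simp add: sets_L_iff)
  then show ?thesis by (simp add: L_def emeasure_restrict_space)
qed

lemma emeasure_L_space: "emeasure L (space L) = ennreal (1 / measure \<sigma> (space \<sigma>))"
  using emeasure_L[OF sets.top] by (simp add: space_L)

lemma measure_L_space: "measure L (space L) = 1 / measure \<sigma> (space \<sigma>)"
  by (simp add: measure_def emeasure_L_space)

sublocale sigma: finite_measure \<sigma>
  by (rule finite_\<sigma>)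

sublocale L: finite_measure L
  by (rule finite_measureI) (simp add: emeasure_L_space)

sublocale pair_sigma_finite \<sigma> L ..

lemma space_M: "space M = space \<sigma> \<times> {0..<1}"
  by (simp add: M_def space_pair_measure space_L)

lemma skew_measurable: "skew n \<in> measurable M M"
proof -
  have "(\<lambda>p. frac (snd p + of_int n * fst p)) \<in> measurable M lborel"
    unfolding M_def by measurable
  then have "(\<lambda>p. frac (snd p + of_int n * fst p)) \<in> measurable M (restrict_space lborel {0..<1})"
    by (rule measurable_restrict_space2[rotated]) (simp add: frac_lt_1)
  then have "(\<lambda>p. (fst p, frac (snd p + of_int n * fst p))) \<in> measurable M (\<sigma> \<Otimes>\<^sub>M L)"
    unfolding M_def by (intro measurable_Pair) (simp_all add: measurable_cong_sets[OF refl sets_L])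
  then show ?thesis by (simp add: skew_def[abs_def] M_def)
qed

lemma emeasure_L_frac_translate:
  assumes "X \<in> sets L"
  shows "emeasure L {y\<in>{0..<1}. frac (y + t) \<in> X} = emeasure L X"
proof -
  have X: "X \<in> sets borel" "X \<subseteq> {0..<1}"
    using assms by (simp_all add: sets_L_iff)
  have "{y\<in>{0..<1}. frac (y + t) \<in> X} \<in> sets borel"
    using X(1) by measurable
  then have translate: "{y\<in>{0..<1}. frac (y + t) \<in> X} \<in> sets L"
    by (auto simp: sets_L_iff)
  show ?thesis
    by (simp only: emeasure_L[OF translate] emeasure_L[OF assms] emeasure_lborel_frac_translate[OF X])
qed

lemma distr_skew: "distr M M (skew n) = M"
proof (rule measure_eqI)
  fix A assume "A \<in> sets (distr M M (skew n))"
  then have A: "A \<in> sets (\<sigma> \<Otimes>\<^sub>M L)" by (simp add: M_def)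
  have "emeasure (distr M M (skew n)) A = emeasure M (skew n -` A \<inter> space M)"
    using A by (intro emeasure_distr skew_measurable) (simp add: M_def)
  also have "\<dots> = (\<integral>\<^sup>+t. emeasure L (Pair t -` (skew n -` A \<inter> space M)) \<partial>\<sigma>)"
    unfolding M_def by (rule L.emeasure_pair_measure_alt)
      (use measurable_sets[OF skew_measurable, of A] A in \<open>simp add: M_def\<close>)
  also have "\<dots> = (\<integral>\<^sup>+t. emeasure L (Pair t -` A) \<partial>\<sigma>)"
  proof (rule nn_integral_cong)
    fix t assume t: "t \<in> space \<sigma>"
    then have "Pair t -` (skew n -` A \<inter> space M) = {y\<in>{0..<1}. frac (y + of_int n * t) \<in> Pair t -` A}"
      by (auto simp: skew_def space_M)
    then show "emeasure L (Pair t -` (skew n -` A \<inter> space M)) = emeasure L (Pair t -` A)"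
      using emeasure_L_frac_translate[OF sets_Pair1[OF A]] by simp
  qed
  also have "\<dots> = emeasure M A"
    unfolding M_def by (rule L.emeasure_pair_measure_alt[symmetric, OF A])
  finally show "emeasure (distr M M (skew n)) A = emeasure M A" .
qed simp

lemma space_\<mu>: "space \<mu> = embed_pair ` space M"
  by (simp add: \<mu>_def space_embed_measure)

lemma embed_pair_measurable: "embed_pair \<in> measurable M \<mu>"
  unfolding \<mu>_def by (rule measurable_embed_measure2[OF inj_embed_pair])

lemma \<mu>_eq_distr: "\<mu> = distr M \<mu> embed_pair"
  unfolding \<mu>_def by (rule embed_measure_eq_distr[OF inj_embed_pair])

lemma measurable_\<mu>_iff: "f \<in> measurable \<mu> N \<longleftrightarrow> (\<lambda>p. f (embed_pair p)) \<in> measurable M N"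
  using measurable_embed_measure1[of f embed_pair M N] measurable_compose[OF embed_pair_measurable]
  unfolding \<mu>_def by blast

lemma prob_space_\<mu>: "prob_space \<mu>"
proof (rule prob_spaceI)
  have "emeasure \<mu> (space \<mu>) = emeasure M (embed_pair -` space \<mu> \<inter> space M)"
    unfolding \<mu>_def by (rule emeasure_embed_measure[OF inj_embed_pair]) simp
  also have "embed_pair -` space \<mu> \<inter> space M = space M"
    by (auto simp: space_\<mu>)
  also have "emeasure M (space M) = emeasure \<sigma> (space \<sigma>) * emeasure L (space L)"
    unfolding M_def space_pair_measure by (rule L.emeasure_pair_measure_Times) auto
  also have "\<dots> = 1"
    using mass_pos by (simp add: emeasure_L_space sigma.emeasure_eq_measure flip: ennreal_mult)
  finally show "emeasure \<mu> (space \<mu>) = 1" .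
qed

lemma skew_flow_measurable: "skew_flow n \<in> measurable \<mu> \<mu>"
  unfolding measurable_\<mu>_iff skew_flow_embed_pair
  by (rule measurable_compose[OF skew_measurable embed_pair_measurable])

lemma distr_skew_flow: "distr \<mu> \<mu> (skew_flow 1) = \<mu>"
proof -
  have "distr \<mu> \<mu> (skew_flow 1) = distr (distr M \<mu> embed_pair) \<mu> (skew_flow 1)"
    by (subst (1) \<mu>_eq_distr) simp
  also have "\<dots> = distr M \<mu> (skew_flow 1 \<circ> embed_pair)"
    by (rule distr_distr[OF skew_flow_measurable embed_pair_measurable])
  also have "\<dots> = distr M \<mu> (embed_pair \<circ> skew 1)"
    by (simp add: comp_def skew_flow_embed_pair)
  also have "\<dots> = distr (distr M M (skew 1)) \<mu> embed_pair"
    by (rule distr_distr[OF embed_pair_measurable skew_measurable, symmetric])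
  also have "\<dots> = \<mu>"
    by (simp only: distr_skew \<mu>_eq_distr[symmetric])
  finally show ?thesis .
qed

sublocale measurable_flow \<mu> skew_flow
proof
  fix z assume "z \<in> space \<mu>"
  then obtain p where "p \<in> space M" "z = embed_pair p" by (auto simp: space_\<mu>)
  then show "skew_flow 0 z = z"
    by (auto simp: skew_flow_embed_pair skew_def space_M)
qed (simp_all add: skew_flow_measurable skew_flow_add)

lemma invertible_mps_skew_flow: "invertible_mps \<mu> (skew_flow 1)"
  by (rule invertible_mps_flow[OF prob_space_\<mu> distr_skew_flow])

lemma Linfty_skew_observable: "Linfty \<mu> (skew_observable j)"
  unfolding Linfty_def
proof
  have "(\<lambda>p. cis (2 * pi * (if j = 0 then - snd p else snd p))) \<in> borel_measurable M"
    unfolding M_def by measurable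
  then show "skew_observable j \<in> borel_measurable \<mu>"
    by (simp add: measurable_\<mu>_iff skew_observable_def cong: if_cong)
  show "\<exists>C. AE z in \<mu>. norm (skew_observable j z) \<le> C"
    by (auto simp: skew_observable_def)
qed

lemma linear_correlation_skew:
  "linear_correlation_of \<mu> (skew_flow 1) 1 skew_observable int n
    = fourier_coeff \<sigma> n / complex_of_real (measure \<sigma> (space \<sigma>))"
proof -
  have measurable [measurable]: "(\<lambda>p. cis (2 * pi * of_int n * fst p)) \<in> borel_measurable M"
    unfolding M_def by measurable
  have "linear_correlation_of \<mu> (skew_flow 1) 1 skew_observable int n
      = (\<integral>z. cis (2 * pi * of_int n * z 0) \<partial>\<mu>)"
    unfolding linear_correlation_of_def
    by (rule Bochner_Integration.integral_cong[OF refl]) (simp only: iterZ_flow skew_observable_product)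
  also have "\<dots> = (\<integral>p. cis (2 * pi * of_int n * fst p) \<partial>M)"
    by (subst \<mu>_eq_distr, subst integral_distr[OF embed_pair_measurable])
       (simp_all add: measurable_\<mu>_iff)
  also have "\<dots> = (\<integral>t. (\<integral>y. cis (2 * pi * of_int n * t) \<partial>L) \<partial>\<sigma>)"
  proof -
    interpret finite_measure M
      unfolding M_def by (rule finite_measure_pair_measure) unfold_locales
    have "integrable M (\<lambda>p. cis (2 * pi * of_int n * fst p))"
      by (rule integrable_const_bound[where B=1]) auto
    from integral_fst'[OF this[unfolded M_def]] show ?thesis
      by (simp add: M_def)
  qed
  also have "\<dots> = fourier_coeff \<sigma> n / complex_of_real (measure \<sigma> (space \<sigma>))"
    by (simp add: measure_L_space fourier_coeff_def scaleR_conv_of_real divide_inverse mult.commute)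
  finally show ?thesis .
qed

end

lemma is_linear_correlation_normalized_fourier_coeff:
  fixes \<sigma> :: "real measure"
  assumes "finite_measure \<sigma>" and "(\<lambda>x. x) \<in> borel_measurable \<sigma>" and "0 < measure \<sigma> (space \<sigma>)"
  shows "is_linear_correlation TYPE(int \<Rightarrow> real)
    (\<lambda>n. fourier_coeff \<sigma> n / complex_of_real (measure \<sigma> (space \<sigma>)))"
proof -
  interpret normalized_skew_product \<sigma>
    unfolding normalized_skew_product_def using assms by blast
  show ?thesis
    unfolding is_linear_correlation_def
    using invertible_mps_skew_flow Linfty_skew_observable linear_correlation_skew
    by (intro exI[of _ \<mu>] exI[of _ "skew_flow 1"] exI[of _ 1] exI[of _ skew_observable] exI[of _ int])
       (simp add: fun_eq_iff)
qed

theorem proposition6p1: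
  fixes r :: "nat \<Rightarrow> int" and \<sigma> :: "real measure"
  assumes "strict_mono r"
    and "circle_measure \<sigma>"
    and "\<forall>t \<in> space \<sigma>. emeasure \<sigma> {t} = 0"
    and "\<not> null_along r (fourier_coeff \<sigma>)"
  shows "\<exists>a b. is_linear_correlation TYPE(int \<Rightarrow> real) a \<and> null_component a b \<and> \<not> null_along r b"
proof -
  define m where "m = measure \<sigma> (space \<sigma>)"
  have "0 < m"
    unfolding m_def using assms(4) by (rule measure_space_pos_if_not_null_along)
  define a where "a n = fourier_coeff \<sigma> n / complex_of_real m" for n
  have scaled: "null_along s a \<longleftrightarrow> null_along s (fourier_coeff \<sigma>)" for s
    unfolding a_def divide_inverse using \<open>0 < m\<close> by (simp add: null_along_mult_const_iff)
  have "is_linear_correlation TYPE(int \<Rightarrow> real) a"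
    unfolding a_def m_def using assms(2) \<open>0 < m\<close>
    by (intro is_linear_correlation_normalized_fourier_coeff)
       (simp_all add: circle_measure_def circle_measure_measurable_id m_def)
  moreover have "bounded (range a)"
    using norm_fourier_coeff_le[of \<sigma>] \<open>0 < m\<close>
    by (intro boundedI[of _ 1]) (auto simp: a_def m_def norm_divide divide_le_eq)
  moreover have "null_seq a"
    using null_seq_fourier_coeff[OF assms(2,3)] by (simp add: null_seq_def scaled)
  ultimately show ?thesis
    using null_component_self assms(4) scaled by blast
qed

end
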